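(* Let $f^*$ be any maximum flow in $\mathcal{H}$ and $\mathcal{H}_{f^*}$ the residual graph. Let $V_1$ be a nonempty subset of $V$, $\Lambda_1=\{\lambda\in\Lambda:\lambda\subseteq V_1\}$, and $\mathcal{S}=\{s\}\cup V_1\cup\Lambda_1$. The following are equivalent: (1) $V_1$ induces an $h$-clique densest subgraph of $G$, i.e. $\rho_h(V_1)=\rho_h^*$; (2) $(\mathcal{S},V_\mathcal{H}\setminus\mathcal{S})$ is a minimum $s$-$t$ cut of $\mathcal{H}$; (3) there is no arc in $\mathcal{H}_{f^*}$ from a node of $\mathcal{S}$ to a node of $V_\mathcal{H}\setminus\mathcal{S}$.
   Context: Let $G=(V,E)$ be a finite simple undirected graph and $h\ge2$. An $h$-clique is a set of $h$ pairwise adjacent nodes; $\mu_h(G[W])$ counts $h$-cliques inside $W$; for nonempty $W$, $\rho_h(W)=\mu_h(G[W])/|W|$; $\rho_h^*=\max_{\emptyset\ne W\subseteq V}\rho_h(W)$; $deg_G(v,h)$ is the number of $h$-cliques containing $v$; $\Lambda$ is the set of $(h-1)$-cliques of $G$ contained in some $h$-clique. Flow network $\mathcal{H}=(V_\mathcal{H},E_\mathcal{H},c)$: $V_\mathcal{H}=V\cup\Lambda\cup\{s,t\}$; for $v\in V$: arcs $(s,v)$ cap. $deg_G(v,h)$, $(v,t)$ cap. $h\rho_h^*$, $(v,s),(t,v)$ cap. $0$; for $\lambda\in\Lambda$, $v\in\lambda$: $(\lambda,v)$ cap. $+\infty$, $(v,\lambda)$ cap. $0$; for $\lambda\in\Lambda$,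 $v\in V$ with $\lambda\cup\{v\}$ an $h$-clique: $(v,\lambda)$ cap. $1$, $(\lambda,v)$ cap. $0$; no other arcs. A flow $f$ assigns reals to arcs with $f(u,v)\le c(u,v)$, $f(v,u)=-f(u,v)$, and conservation at every node other than $s,t$; its value is $\sum_v f(s,v)$. The residual graph $\mathcal{H}_{f}$ is the directed graph on $V_\mathcal{H}$ having an arc $(u,v)$ whenever $(u,v)\in E_\mathcal{H}$ and $c(u,v)-f(u,v)>0$. Cut capacities are sums of capacities of arcs from $\mathcal{S}$ to its complement. *)

theory Defs
  imports "HOL-Library.Extended_Real"
begin

definition simple_graph :: "'a set \<Rightarrow> 'a set set \<Rightarrow> bool" where
  "simple_graph V E \<longleftrightarrow> finite V \<and> (\<forall>e\<in>E. e \<subseteq> V \<and> card e = 2)"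

definition cliques :: "'a set \<Rightarrow> 'a set set \<Rightarrow> nat \<Rightarrow> 'a set set" where
  "cliques V E h = {K. K \<subseteq> V \<and> card K = h \<and> (\<forall>u\<in>K. \<forall>v\<in>K. u \<noteq> v \<longrightarrow> {u, v} \<in> E)}"

definition mu :: "'a set \<Rightarrow> 'a set set \<Rightarrow> nat \<Rightarrow> 'a set \<Rightarrow> nat" where
  "mu V E h W = card {K \<in> cliques V E h. K \<subseteq> W}"

definition rho :: "'a set \<Rightarrow> 'a set set \<Rightarrow> nat \<Rightarrow> 'a set \<Rightarrow> real" where
  "rho V E h W = real (mu V E h W) / real (card W)"

definition rho_star :: "'a set \<Rightarrow> 'a set set \<Rightarrow> nat \<Rightarrow> real" where
  "rho_star V E h = Max (rho V E h ` {W. W \<subseteq> V \<and> W \<noteq> {}})"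

definition cdeg :: "'a set \<Rightarrow> 'a set set \<Rightarrow> nat \<Rightarrow> 'a \<Rightarrow> nat" where
  "cdeg V E h v = card {K \<in> cliques V E h. v \<in> K}"

definition Lam :: "'a set \<Rightarrow> 'a set set \<Rightarrow> nat \<Rightarrow> 'a set set" where
  "Lam V E h = {l \<in> cliques V E (h - 1). \<exists>K \<in> cliques V E h. l \<subseteq> K}"

datatype 'a fnode = Src | Snk | VN 'a | LN "'a set"

definition netV :: "'a set \<Rightarrow> 'a set set \<Rightarrow> nat \<Rightarrow> 'a fnode set" where
  "netV V E h = {Src, Snk} \<union> VN ` V \<union> LN ` Lam V E h"

definition netE :: "'a set \<Rightarrow> 'a set set \<Rightarrow> nat \<Rightarrow> ('a fnode \<times> 'a fnode) set" where
  "netE V E h =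
     {(Src, VN v) | v. v \<in> V} \<union> {(VN v, Src) | v. v \<in> V}
   \<union> {(VN v, Snk) | v. v \<in> V} \<union> {(Snk, VN v) | v. v \<in> V}
   \<union> {(LN l, VN v) | l v. l \<in> Lam V E h \<and> v \<in> l}
   \<union> {(VN v, LN l) | l v. l \<in> Lam V E h \<and> v \<in> l}
   \<union> {(VN v, LN l) | l v. l \<in> Lam V E h \<and> v \<in> V \<and> insert v l \<in> cliques V E h \<and> v \<notin> l}
   \<union> {(LN l, VN v) | l v. l \<in> Lam V E h \<and> v \<in> V \<and> insert v l \<in> cliques V E h \<and> v \<notin> l}"

text \<open>Capacities (only meaningful on arcs of netE).\<close>
definition cap :: "'a set \<Rightarrow> 'a set set \<Rightarrow> nat \<Rightarrow> 'a fnode \<Rightarrow> 'a fnode \<Rightarrow> ereal" where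
  "cap V E h u w =
     (case (u, w) of
        (Src, VN v) \<Rightarrow> ereal (real (cdeg V E h v))
      | (VN v, Snk) \<Rightarrow> ereal (real h * rho_star V E h)
      | (LN l, VN v) \<Rightarrow> (if v \<in> l then \<infinity> else 0)
      | (VN v, LN l) \<Rightarrow> (if v \<notin> l \<and> insert v l \<in> cliques V E h then 1 else 0)
      | _ \<Rightarrow> 0)"

definition is_flow :: "'a set \<Rightarrow> 'a set set \<Rightarrow> nat \<Rightarrow> ('a fnode \<Rightarrow> 'a fnode \<Rightarrow> real) \<Rightarrow> bool" where
  "is_flow V E h f \<longleftrightarrow>
     (\<forall>(u, w) \<in> netE V E h. ereal (f u w) \<le> cap V E h u w \<and> f w u = - f u w)
   \<and> (\<forall>u w. (u, w) \<notin> netE V E h \<longrightarrow> f u w = 0)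
   \<and> (\<forall>u \<in> netV V E h - {Src, Snk}. (\<Sum>w\<in>netV V E h. f u w) = 0)"

definition flow_value :: "'a set \<Rightarrow> ('a fnode \<Rightarrow> 'a fnode \<Rightarrow> real) \<Rightarrow> real" where
  "flow_value V f = (\<Sum>v\<in>V. f Src (VN v))"

definition is_max_flow :: "'a set \<Rightarrow> 'a set set \<Rightarrow> nat \<Rightarrow> ('a fnode \<Rightarrow> 'a fnode \<Rightarrow> real) \<Rightarrow> bool" where
  "is_max_flow V E h f \<longleftrightarrow> is_flow V E h f \<and>
     (\<forall>g. is_flow V E h g \<longrightarrow> flow_value V g \<le> flow_value V f)"

definition residual_arc :: "'a set \<Rightarrow> 'a set set \<Rightarrow> nat \<Rightarrow> ('a fnode \<Rightarrow> 'a fnode \<Rightarrow> real) \<Rightarrow> 'a fnode \<Rightarrow> 'a fnode \<Rightarrow> bool" where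
  "residual_arc V E h f u w \<longleftrightarrow> (u, w) \<in> netE V E h \<and> cap V E h u w - ereal (f u w) > 0"

definition is_st_cut :: "'a set \<Rightarrow> 'a set set \<Rightarrow> nat \<Rightarrow> 'a fnode set \<Rightarrow> bool" where
  "is_st_cut V E h X \<longleftrightarrow> X \<subseteq> netV V E h \<and> Src \<in> X \<and> Snk \<notin> X"

definition cut_cap :: "'a set \<Rightarrow> 'a set set \<Rightarrow> nat \<Rightarrow> 'a fnode set \<Rightarrow> ereal" where
  "cut_cap V E h X = (\<Sum>(u, w) \<in> {(u, w) \<in> netE V E h. u \<in> X \<and> w \<notin> X}. cap V E h u w)"

definition is_min_st_cut :: "'a set \<Rightarrow> 'a set set \<Rightarrow> nat \<Rightarrow> 'a fnode set \<Rightarrow> bool" where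
  "is_min_st_cut V E h X \<longleftrightarrow> is_st_cut V E h X \<and>
     (\<forall>Y. is_st_cut V E h Y \<longrightarrow> cut_cap V E h X \<le> cut_cap V E h Y)"

end

theory Submission
  imports Defs "HOL-Library.Transitive_Closure_Table"
begin

text \<open>Let \<open>Y\<close> be an \<open>s\<close>-\<open>t\<close> cut whose vertex part is \<open>A\<close>. If some \<open>(h-1)\<close>-clique in \<open>Y\<close> has
  a vertex outside \<open>Y\<close>, an infinite arc crosses the cut. Otherwise the cut contains the source arcs
  of the vertices outside \<open>A\<close>, which pay for all clique incidences \<open>(v, K)\<close> with \<open>v \<notin> A\<close>; the
  unit arcs from \<open>v \<in> A\<close> to \<open>K - {v}\<close>, which pay for the incidences with \<open>v \<in> A\<close> and
  \<open>K \<nsubseteq> A\<close>; and the sink arcs, which contribute \<open>h \<rho>\<^sup>*\<close> per vertex of \<open>A\<close>. Hence its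
  capacity is at least \<open>h \<mu>(V) - h \<mu>(A) + h |A| \<rho>\<^sup>*\<close>, with equality for the cut
  \<open>{s} \<union> A \<union> \<Lambda>(A)\<close>. Since \<open>\<mu>(A) \<le> |A| \<rho>\<^sup>*\<close>, the minimum cut capacity is \<open>h \<mu>(V)\<close>,
  attained at \<open>A = {}\<close>, and the cut of \<open>V\<^sub>1\<close> is minimum iff \<open>\<mu>(V\<^sub>1) = |V\<^sub>1| \<rho>\<^sup>*\<close>. The
  equivalence with the absence of residual arcs leaving the cut is max-flow/min-cut duality.\<close>

lemma sum_skew_symmetric_eq_0:
  fixes g :: "'b \<Rightarrow> 'b \<Rightarrow> real"
  assumes "\<And>u w. g w u = - g u w"
  shows "(\<Sum>u\<in>Y. \<Sum>w\<in>Y. g u w) = 0"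
proof -
  have "(\<Sum>u\<in>Y. \<Sum>w\<in>Y. g u w) = (\<Sum>w\<in>Y. \<Sum>u\<in>Y. g u w)" by (rule sum.swap)
  also have "\<dots> = - (\<Sum>w\<in>Y. \<Sum>u\<in>Y. g w u)" by (subst assms) (simp add: sum_negf)
  finally show ?thesis by simp
qed

lemma ereal_uniform_slack:
  assumes "finite P" and "\<And>x. x \<in> P \<Longrightarrow> ereal (a x) < c x"
  shows "\<exists>e>0. \<forall>x\<in>P. ereal (a x + e) \<le> c x"
  using assms
proof (induction P rule: finite_induct)
  case empty
  show ?case by (intro exI[of _ 1]) auto
next
  case (insert y P)
  then obtain e where e: "e > 0" "\<forall>x\<in>P. ereal (a x + e) \<le> c x" by blast
  obtain d where d: "d > 0" "ereal (a y + d) \<le> c y"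
  proof (cases "c y")
    case (real r)
    then show ?thesis using insert.prems[of y] that[of "r - a y"] by simp
  next
    case PInf
    then show ?thesis using that[of 1] by simp
  next
    case MInf
    then show ?thesis using insert.prems[of y] by simp
  qed
  have "ereal (a x + min e d) \<le> c x" if "x \<in> insert y P" for x
  proof -
    have "ereal (a x + min e d) \<le> ereal (a x + (if x = y then d else e))" by simp
    also have "\<dots> \<le> c x" using that e d by auto
    finally show ?thesis .
  qed
  then show ?case using e d by (intro exI[of _ "min e d"]) auto
qed


definition path_arcs :: "'b list \<Rightarrow> ('b \<times> 'b) set" where
  "path_arcs p = {(p ! i, p ! Suc i) | i. Suc i < length p}"

lemma finite_path_arcs: "finite (path_arcs p)"
proof -
  have "path_arcs p = (\<lambda>i. (p ! i, p ! Suc i)) ` {..<length p - 1}"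
    by (auto simp: path_arcs_def)
  then show ?thesis by simp
qed

lemma path_arcs_out:
  assumes "distinct p" "i < length p"
  shows "(p ! i, w) \<in> path_arcs p \<longleftrightarrow> Suc i < length p \<and> w = p ! Suc i"
  using assms by (auto simp: path_arcs_def nth_eq_iff_index_eq)

lemma path_arcs_in:
  assumes "distinct p" "i < length p"
  shows "(w, p ! i) \<in> path_arcs p \<longleftrightarrow> 0 < i \<and> w = p ! (i - 1)"
proof
  assume "(w, p ! i) \<in> path_arcs p"
  then obtain j where j: "Suc j < length p" "w = p ! j" "p ! Suc j = p ! i"
    by (auto simp: path_arcs_def)
  then have "Suc j = i" using assms nth_eq_iff_index_eq by metis
  then show "0 < i \<and> w = p ! (i - 1)" using j by auto
next
  assume "0 < i \<and> w = p ! (i - 1)"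
  then show "(w, p ! i) \<in> path_arcs p"
    using assms unfolding path_arcs_def by (intro CollectI exI[of _ "i - 1"]) auto
qed

lemma path_arcs_asym: "distinct p \<Longrightarrow> (u, w) \<in> path_arcs p \<Longrightarrow> (w, u) \<notin> path_arcs p"
  by (auto simp: path_arcs_def nth_eq_iff_index_eq)

lemma path_arcs_subset: "path_arcs p \<subseteq> set p \<times> set p"
  by (auto simp: path_arcs_def)

lemma set_subset_Field_path_arcs:
  assumes "2 \<le> length p"
  shows "set p \<subseteq> Field (path_arcs p)"
proof
  fix u assume "u \<in> set p"
  then obtain i where i: "i < length p" "u = p ! i" by (auto simp: in_set_conv_nth)
  show "u \<in> Field (path_arcs p)"
  proof (cases "Suc i < length p")
    case True
    then have "(u, p ! Suc i) \<in> path_arcs p" using i by (auto simp: path_arcs_def)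
    then show ?thesis by (rule FieldI1)
  next
    case False
    then have "(p ! (i - 1), u) \<in> path_arcs p"
      using i assms unfolding path_arcs_def by (intro CollectI exI[of _ "i - 1"]) auto
    then show ?thesis by (rule FieldI2)
  qed
qed

text \<open>Along a simple path, every inner node has one outgoing and one incoming path arc.\<close>

lemma path_arcs_balance:
  assumes "finite N" "set p \<subseteq> N" "distinct p" "u \<noteq> hd p" "u \<noteq> last p"
  shows "(\<Sum>w\<in>N. of_bool ((u, w) \<in> path_arcs p) - of_bool ((w, u) \<in> path_arcs p) :: real) = 0"
proof (cases "u \<in> set p")
  case False
  then show ?thesis by (intro sum.neutral) (use path_arcs_subset[of p] in auto)
next
  case True
  then obtain i where i: "i < length p" "u = p ! i" by (auto simp: in_set_conv_nth)
  have "p \<noteq> []" using True by auto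
  then have "i \<noteq> 0" "i \<noteq> length p - 1"
    using i assms(4,5) by (metis hd_conv_nth, metis last_conv_nth)
  then have "0 < i" "Suc i < length p" using i(1) by auto
  then have "(\<Sum>w\<in>N. of_bool ((u, w) \<in> path_arcs p) - of_bool ((w, u) \<in> path_arcs p) :: real)
      = (\<Sum>w\<in>N. of_bool (w = p ! Suc i) - of_bool (w = p ! (i - 1)))"
    using path_arcs_out[OF assms(3) i(1)] path_arcs_in[OF assms(3) i(1)] i(2)
    by (intro sum.cong) auto
  also have "\<dots> = 0"
    using assms(1,2) \<open>Suc i < length p\<close> by (simp add: sum_subtractf of_bool_def subset_iff)
  finally show ?thesis .
qed

definition augment :: "('b \<times> 'b) set \<Rightarrow> real \<Rightarrow> ('b \<Rightarrow> 'b \<Rightarrow> real) \<Rightarrow> 'b \<Rightarrow> 'b \<Rightarrow> real" where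
  "augment P e f u w = f u w + e * (of_bool ((u, w) \<in> P) - of_bool ((w, u) \<in> P))"


text \<open>\<open>V \<noteq> {}\<close> makes \<open>rho_star\<close> a genuine maximum, hence nonnegative, so that all capacities
  are nonnegative.\<close>

locale net =
  fixes V :: "'a set" and E :: "'a set set" and h :: nat
  assumes simple: "simple_graph V E" and h_ge_2: "h \<ge> 2" and V_nonempty: "V \<noteq> {}"
begin

lemma finite_V: "finite V"
  using simple by (simp add: simple_graph_def)

lemma clique_subset: "K \<in> cliques V E h \<Longrightarrow> K \<subseteq> V \<and> card K = h"
  by (simp add: cliques_def)

lemma finite_cliques: "finite (cliques V E h)"
  by (rule finite_subset[of _ "Pow V"]) (auto simp: cliques_def finite_V)

lemma Lam_subset: "l \<in> Lam V E h \<Longrightarrow> l \<subseteq> V"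
  by (simp add: Lam_def cliques_def)

lemma finite_Lam: "finite (Lam V E h)"
  by (rule finite_subset[of _ "Pow V"]) (auto dest: Lam_subset simp: finite_V)

lemma finite_netV: "finite (netV V E h)"
  using finite_V finite_Lam by (simp add: netV_def)

lemma netE_sym: "(u, w) \<in> netE V E h \<Longrightarrow> (w, u) \<in> netE V E h"
  unfolding netE_def by blast

lemma netE_subset: "netE V E h \<subseteq> netV V E h \<times> netV V E h"
  unfolding netE_def netV_def using Lam_subset by blast

lemma finite_netE: "finite (netE V E h)"
  using netE_subset finite_netV by (meson finite_SigmaI finite_subset)

lemma rho_le_rho_star: "A \<subseteq> V \<Longrightarrow> A \<noteq> {} \<Longrightarrow> rho V E h A \<le> rho_star V E h"
  unfolding rho_star_def using finite_V by (intro Max_ge) auto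

lemma rho_star_nonneg: "rho_star V E h \<ge> 0"
  using rho_le_rho_star[of V] V_nonempty by (simp add: rho_def order_trans[rotated])

lemma mu_empty: "mu V E h {} = 0"
  using h_ge_2 by (auto simp: mu_def cliques_def)

lemma mu_le:
  assumes A: "A \<subseteq> V"
  shows "real (mu V E h A) \<le> real (card A) * rho_star V E h"
proof (cases "A = {}")
  case True
  then show ?thesis by (simp add: mu_empty)
next
  case False
  then have "real (card A) > 0" using finite_subset[OF A finite_V] by (simp add: card_gt_0_iff)
  then show ?thesis
    using rho_le_rho_star[OF A False] by (simp add: rho_def divide_le_eq mult.commute)
qed

lemma cap_nonneg: "cap V E h u w \<ge> 0"
  using rho_star_nonneg by (auto simp: cap_def split: fnode.splits)

lemma residual_arc_iff:
  "residual_arc V E h f u w \<longleftrightarrow> (u, w) \<in> netE V E h \<and> ereal (f u w) < cap V E h u w"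
  by (cases "cap V E h u w") (auto simp: residual_arc_def)

lemma flow_le_cap: "is_flow V E h f \<Longrightarrow> (u, w) \<in> netE V E h \<Longrightarrow> ereal (f u w) \<le> cap V E h u w"
  unfolding is_flow_def by blast

lemma flow_outside_netE: "is_flow V E h f \<Longrightarrow> (u, w) \<notin> netE V E h \<Longrightarrow> f u w = 0"
  unfolding is_flow_def by blast

lemma flow_conservation:
  "is_flow V E h f \<Longrightarrow> u \<in> netV V E h - {Src, Snk} \<Longrightarrow> (\<Sum>w\<in>netV V E h. f u w) = 0"
  unfolding is_flow_def by blast

lemma flow_skew:
  assumes "is_flow V E h f" shows "f w u = - f u w"
proof (cases "(u, w) \<in> netE V E h")
  case True
  then show ?thesis using assms by (auto simp: is_flow_def)
next
  case False
  then show ?thesis using assms netE_sym[of w u] by (auto simp: is_flow_def)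
qed

definition crossing :: "'a fnode set \<Rightarrow> ('a fnode \<times> 'a fnode) set" where
  "crossing Y = {(u, w) \<in> netE V E h. u \<in> Y \<and> w \<notin> Y}"

lemma finite_crossing: "finite (crossing Y)"
  by (rule finite_subset[OF _ finite_netE]) (auto simp: crossing_def)

lemma cut_cap_eq_sum_crossing: "cut_cap V E h Y = (\<Sum>(u, w)\<in>crossing Y. cap V E h u w)"
  by (simp add: cut_cap_def crossing_def)

lemma sum_flow_out_of_cut:
  assumes f: "is_flow V E h f" and Y: "is_st_cut V E h Y"
  shows "(\<Sum>u\<in>Y. \<Sum>w\<in>netV V E h. f u w) = flow_value V f"
proof -
  let ?N = "netV V E h"
  have "finite Y" "Src \<in> Y" "Y - {Src} \<subseteq> ?N - {Src, Snk}"
    using Y finite_subset[OF _ finite_netV] by (auto simp: is_st_cut_def)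
  then have "(\<Sum>u\<in>Y. \<Sum>w\<in>?N. f u w) = (\<Sum>w\<in>?N. f Src w)"
    using flow_conservation[OF f] by (simp add: sum.remove subset_iff)
  also have "\<dots> = (\<Sum>w\<in>VN ` V. f Src w)"
    using flow_outside_netE[OF f] finite_netV
    by (intro sum.mono_neutral_right) (auto simp: netV_def netE_def)
  also have "\<dots> = flow_value V f"
    by (simp add: flow_value_def sum.reindex inj_on_def)
  finally show ?thesis .
qed

lemma flow_value_eq_sum_crossing:
  assumes f: "is_flow V E h f" and Y: "is_st_cut V E h Y"
  shows "flow_value V f = (\<Sum>(u, w)\<in>crossing Y. f u w)"
proof -
  let ?N = "netV V E h"
  have YN: "Y \<subseteq> ?N" and finY: "finite Y"
    using Y finite_subset[OF _ finite_netV] by (auto simp: is_st_cut_def)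
  have "flow_value V f = (\<Sum>u\<in>Y. \<Sum>w\<in>Y. f u w) + (\<Sum>u\<in>Y. \<Sum>w\<in>?N - Y. f u w)"
    unfolding sum_flow_out_of_cut[OF f Y, symmetric] sum.distrib[symmetric]
    using YN finite_netV by (intro sum.cong refl) (metis sum.subset_diff add.commute)
  also have "(\<Sum>u\<in>Y. \<Sum>w\<in>Y. f u w) = 0"
    by (rule sum_skew_symmetric_eq_0) (rule flow_skew[OF f])
  also have "(\<Sum>u\<in>Y. \<Sum>w\<in>?N - Y. f u w) = (\<Sum>(u, w)\<in>Y \<times> (?N - Y). f u w)"
    by (simp add: sum.cartesian_product)
  also have "\<dots> = (\<Sum>(u, w)\<in>crossing Y. f u w)"
    using finY finite_netV netE_subset flow_outside_netE[OF f]
    by (intro sum.mono_neutral_right) (auto simp: crossing_def)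
  finally show ?thesis by simp
qed

lemma flow_value_le_cut_cap:
  assumes f: "is_flow V E h f" and Y: "is_st_cut V E h Y"
  shows "ereal (flow_value V f) \<le> cut_cap V E h Y"
proof -
  have "ereal (flow_value V f) = (\<Sum>(u, w)\<in>crossing Y. ereal (f u w))"
    by (simp add: flow_value_eq_sum_crossing[OF f Y] case_prod_beta)
  also have "\<dots> \<le> (\<Sum>(u, w)\<in>crossing Y. cap V E h u w)"
    by (intro sum_mono) (auto simp: crossing_def intro: flow_le_cap[OF f])
  finally show ?thesis by (simp add: cut_cap_eq_sum_crossing)
qed

lemma cut_cap_eq_flow_value:
  assumes f: "is_flow V E h f" and Y: "is_st_cut V E h Y"
    and saturated: "\<not> (\<exists>u\<in>Y. \<exists>w\<in>netV V E h - Y. residual_arc V E h f u w)"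
  shows "cut_cap V E h Y = ereal (flow_value V f)"
proof -
  have "cap V E h u w = ereal (f u w)" if "(u, w) \<in> crossing Y" for u w
  proof -
    have "(u, w) \<in> netE V E h" "u \<in> Y" "w \<in> netV V E h - Y"
      using that netE_subset by (auto simp: crossing_def)
    then have "\<not> ereal (f u w) < cap V E h u w" "ereal (f u w) \<le> cap V E h u w"
      using saturated flow_le_cap[OF f] by (auto simp: residual_arc_iff)
    then show ?thesis by simp
  qed
  then have "cut_cap V E h Y = (\<Sum>(u, w)\<in>crossing Y. ereal (f u w))"
    unfolding cut_cap_eq_sum_crossing by (intro sum.cong) auto
  then show ?thesis by (simp add: flow_value_eq_sum_crossing[OF f Y] case_prod_beta)
qed

lemma flow_value_less_cut_cap:
  assumes f: "is_flow V E h f" and Y: "is_st_cut V E h Y"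
    and "u \<in> Y" "w \<in> netV V E h - Y" "residual_arc V E h f u w"
  shows "ereal (flow_value V f) < cut_cap V E h Y"
proof -
  have uw: "(u, w) \<in> crossing Y" and less: "ereal (f u w) < cap V E h u w"
    using assms(3-5) by (auto simp: residual_arc_iff crossing_def)
  let ?C = "crossing Y - {(u, w)}"
  have rest: "ereal (\<Sum>(x, y)\<in>?C. f x y) \<le> (\<Sum>(x, y)\<in>?C. cap V E h x y)"
    unfolding sum_ereal[symmetric] case_prod_beta
    by (intro sum_mono) (auto simp: crossing_def intro: flow_le_cap[OF f])
  have "ereal (f u w + (\<Sum>(x, y)\<in>?C. f x y)) < cap V E h u w + (\<Sum>(x, y)\<in>?C. cap V E h x y)"
    using less rest
    by (cases "cap V E h u w"; cases "\<Sum>(x, y)\<in>?C. cap V E h x y") auto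
  then show ?thesis
    using uw finite_crossing
    by (simp add: flow_value_eq_sum_crossing[OF f Y] cut_cap_eq_sum_crossing sum.remove)
qed


lemma is_flow_augment:
  assumes f: "is_flow V E h f" and "0 \<le> e" and P: "P \<subseteq> netE V E h"
    and fits: "\<And>u w. (u, w) \<in> P \<Longrightarrow> (w, u) \<notin> P \<and> ereal (f u w + e) \<le> cap V E h u w"
    and balance: "\<And>u. u \<in> netV V E h - {Src, Snk} \<Longrightarrow>
      (\<Sum>w\<in>netV V E h. of_bool ((u, w) \<in> P) - of_bool ((w, u) \<in> P) :: real) = 0"
  shows "is_flow V E h (augment P e f)"
  unfolding is_flow_def
proof (intro conjI ballI allI impI)
  fix x assume "x \<in> netE V E h"
  then obtain u w where x: "x = (u, w)" and uw: "(u, w) \<in> netE V E h" by (cases x) auto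
  have "ereal (augment P e f u w) \<le> cap V E h u w"
  proof (cases "(u, w) \<in> P")
    case True
    then show ?thesis using fits[of u w] by (simp add: augment_def)
  next
    case False
    then have "ereal (augment P e f u w) \<le> ereal (f u w)"
      using \<open>0 \<le> e\<close> by (simp add: augment_def)
    then show ?thesis using flow_le_cap[OF f uw] by (rule order_trans)
  qed
  moreover have "augment P e f w u = - augment P e f u w"
    using flow_skew[OF f, of w u] by (simp add: augment_def algebra_simps)
  ultimately show "case x of (u, w) \<Rightarrow> ereal (augment P e f u w) \<le> cap V E h u w
      \<and> augment P e f w u = - augment P e f u w"
    using x by simp
next
  fix u w assume "(u, w) \<notin> netE V E h"
  then show "augment P e f u w = 0"
    using P netE_sym flow_outside_netE[OF f] by (auto simp: augment_def)
next
  fix u assume u: "u \<in> netV V E h - {Src, Snk}"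
  show "(\<Sum>w\<in>netV V E h. augment P e f u w) = 0"
    using balance[OF u] flow_conservation[OF f u]
    by (simp add: augment_def sum.distrib sum_distrib_left[symmetric])
qed

lemma flow_value_augment:
  "flow_value V (augment P e f)
     = flow_value V f + e * (\<Sum>v\<in>V. of_bool ((Src, VN v) \<in> P) - of_bool ((VN v, Src) \<in> P))"
  by (simp add: flow_value_def augment_def sum.distrib sum_distrib_left)

lemma augmenting_path_increases_flow:
  assumes f: "is_flow V E h f"
    and p: "distinct p" "p \<noteq> []" "hd p = Src" "last p = Snk"
    and residual: "\<And>u w. (u, w) \<in> path_arcs p \<Longrightarrow> residual_arc V E h f u w"
  shows "\<exists>g. is_flow V E h g \<and> flow_value V f < flow_value V g"
proof -
  let ?P = "path_arcs p"
  have "length p \<noteq> 0" "length p \<noteq> 1" using p by (auto simp: length_Suc_conv)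
  then have len: "2 \<le> length p" by linarith
  have P: "?P \<subseteq> netE V E h" using residual by (auto simp: residual_arc_iff)
  have "set p \<subseteq> netV V E h"
    using set_subset_Field_path_arcs[OF len] P netE_subset by (auto simp: Field_def)
  then have balance: "(\<Sum>w\<in>netV V E h. of_bool ((u, w) \<in> ?P) - of_bool ((w, u) \<in> ?P) :: real) = 0"
    if "u \<in> netV V E h - {Src, Snk}" for u
    using that p by (intro path_arcs_balance finite_netV) auto
  obtain e where e: "e > 0" "\<And>u w. (u, w) \<in> ?P \<Longrightarrow> ereal (f u w + e) \<le> cap V E h u w"
    using ereal_uniform_slack[OF finite_path_arcs, of p "\<lambda>(u, w). f u w" "\<lambda>(u, w). cap V E h u w"]
      residual by (force simp: residual_arc_iff)
  have flow: "is_flow V E h (augment ?P e f)"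
    using e path_arcs_asym[OF p(1)] by (intro is_flow_augment[OF f _ P _ balance]) auto
  have src: "p ! 0 = Src" using p by (simp add: hd_conv_nth)
  then obtain v0 where v0: "p ! 1 = VN v0" "v0 \<in> V"
    using P len unfolding path_arcs_def netE_def by (force simp: subset_iff)
  have "(\<Sum>v\<in>V. of_bool ((Src, VN v) \<in> ?P) - of_bool ((VN v, Src) \<in> ?P) :: real)
      = (\<Sum>v\<in>V. of_bool (v = v0))"
  proof (intro sum.cong refl)
    fix v
    have "(Src, VN v) \<in> ?P \<longleftrightarrow> v = v0" "(VN v, Src) \<notin> ?P"
      using path_arcs_out[OF p(1), of 0] path_arcs_in[OF p(1), of 0] p(2) len src v0 by auto
    then show "of_bool ((Src, VN v) \<in> ?P) - of_bool ((VN v, Src) \<in> ?P) = (of_bool (v = v0) :: real)"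
      by simp
  qed
  also have "\<dots> = 1" using v0 finite_V by (simp add: of_bool_def)
  finally have "flow_value V (augment ?P e f) = flow_value V f + e"
    by (simp add: flow_value_augment)
  then show ?thesis using flow e by (intro exI[of _ "augment ?P e f"]) auto
qed

lemma max_flow_no_augmenting_path:
  assumes "is_max_flow V E h f"
  shows "\<not> (residual_arc V E h f)\<^sup>*\<^sup>* Src Snk"
proof
  assume "(residual_arc V E h f)\<^sup>*\<^sup>* Src Snk"
  then obtain xs where "rtrancl_path (residual_arc V E h f) Src xs Snk"
    by (auto simp: rtranclp_eq_rtrancl_path)
  then obtain xs where path: "rtrancl_path (residual_arc V E h f) Src xs Snk"
    and "distinct (Src # xs)"
    by (rule rtrancl_path_distinct)
  have "xs \<noteq> []" using path by (auto elim: rtrancl_path.cases)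
  then have "last (Src # xs) = Snk" using rtrancl_path_last[OF path] by simp
  moreover have "residual_arc V E h f u w" if "(u, w) \<in> path_arcs (Src # xs)" for u w
    using that rtrancl_path_nth[OF path] by (auto simp: path_arcs_def)
  ultimately obtain g where "is_flow V E h g" "flow_value V f < flow_value V g"
    using augmenting_path_increases_flow \<open>distinct (Src # xs)\<close> assms
    by (metis is_max_flow_def list.distinct(1) list.sel(1))
  then show False using assms by (auto simp: is_max_flow_def)
qed

lemma max_flow_saturates_some_cut:
  assumes mf: "is_max_flow V E h f"
  shows "\<exists>R. is_st_cut V E h R \<and> cut_cap V E h R = ereal (flow_value V f)"
proof -
  let ?r = "residual_arc V E h f"
  define R where "R = {w. ?r\<^sup>*\<^sup>* Src w}"
  have "R \<subseteq> netV V E h"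
  proof
    fix w assume "w \<in> R"
    then have "?r\<^sup>*\<^sup>* Src w" by (simp add: R_def)
    then show "w \<in> netV V E h"
      by (induction rule: rtranclp_induct)
        (auto simp: netV_def residual_arc_iff dest: subsetD[OF netE_subset])
  qed
  then have cut: "is_st_cut V E h R"
    using max_flow_no_augmenting_path[OF mf] by (auto simp: is_st_cut_def R_def)
  have "\<not> (\<exists>u\<in>R. \<exists>w\<in>netV V E h - R. ?r u w)"
    by (auto simp: R_def intro: rtranclp.rtrancl_into_rtrancl)
  then show ?thesis
    using mf cut cut_cap_eq_flow_value by (auto simp: is_max_flow_def)
qed

lemma min_st_cut_iff_no_residual_arc:
  assumes mf: "is_max_flow V E h f" and S: "is_st_cut V E h S"
  shows "is_min_st_cut V E h S \<longleftrightarrow> \<not> (\<exists>u\<in>S. \<exists>w\<in>netV V E h - S. residual_arc V E h f u w)"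
proof
  have f: "is_flow V E h f" using mf by (simp add: is_max_flow_def)
  assume min: "is_min_st_cut V E h S"
  obtain R where "is_st_cut V E h R" "cut_cap V E h R = ereal (flow_value V f)"
    using max_flow_saturates_some_cut[OF mf] by blast
  then have "cut_cap V E h S \<le> ereal (flow_value V f)"
    using min by (auto simp: is_min_st_cut_def)
  then show "\<not> (\<exists>u\<in>S. \<exists>w\<in>netV V E h - S. residual_arc V E h f u w)"
    using flow_value_less_cut_cap[OF f S] by force
next
  have f: "is_flow V E h f" using mf by (simp add: is_max_flow_def)
  assume "\<not> (\<exists>u\<in>S. \<exists>w\<in>netV V E h - S. residual_arc V E h f u w)"
  then show "is_min_st_cut V E h S"
    using S cut_cap_eq_flow_value[OF f S] flow_value_le_cut_cap[OF f]
    by (auto simp: is_min_st_cut_def)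
qed


lemma netE_cases:
  assumes "(u, w) \<in> netE V E h"
  obtains (src) v where "u = Src" "w = VN v" "v \<in> V"
  | (src_rev) v where "u = VN v" "w = Src" "v \<in> V"
  | (snk) v where "u = VN v" "w = Snk" "v \<in> V"
  | (snk_rev) v where "u = Snk" "w = VN v" "v \<in> V"
  | (member) l v where "u = LN l" "w = VN v" "l \<in> Lam V E h" "v \<in> l"
  | (member_rev) l v where "u = VN v" "w = LN l" "l \<in> Lam V E h" "v \<in> l"
  | (extension) l v where "u = VN v" "w = LN l" "l \<in> Lam V E h" "v \<notin> l" "insert v l \<in> cliques V E h"
  | (extension_rev) l v where "u = LN l" "w = VN v" "l \<in> Lam V E h" "v \<notin> l"
  using assms unfolding netE_def by auto

definition clique_cut :: "'a set \<Rightarrow> 'a fnode set" where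
  "clique_cut A = {Src} \<union> VN ` A \<union> LN ` {l \<in> Lam V E h. l \<subseteq> A}"

lemma is_st_cut_clique_cut: "A \<subseteq> V \<Longrightarrow> is_st_cut V E h (clique_cut A)"
  by (auto simp: is_st_cut_def clique_cut_def netV_def)

definition outer_incidences :: "'a set \<Rightarrow> ('a \<times> 'a set) set" where
  "outer_incidences A = {(v, K). K \<in> cliques V E h \<and> v \<in> K \<and> v \<notin> A}"

definition straddling_incidences :: "'a set \<Rightarrow> ('a \<times> 'a set) set" where
  "straddling_incidences A = {(v, K). K \<in> cliques V E h \<and> v \<in> K \<and> v \<in> A \<and> \<not> K \<subseteq> A}"

definition inner_incidences :: "'a set \<Rightarrow> ('a \<times> 'a set) set" where
  "inner_incidences A = {(v, K). K \<in> cliques V E h \<and> v \<in> K \<and> K \<subseteq> A}"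

lemma finite_incidences: "finite {(v, K). K \<in> cliques V E h \<and> v \<in> K \<and> P v K}"
  by (rule finite_subset[of _ "V \<times> cliques V E h"])
    (auto dest: clique_subset simp: finite_V finite_cliques)

lemma card_inner_incidences: "card (inner_incidences A) = h * mu V E h A"
proof -
  let ?Q = "{K \<in> cliques V E h. K \<subseteq> A}"
  have "inner_incidences A = (\<lambda>(K, v). (v, K)) ` (SIGMA K:?Q. K)"
    by (auto simp: inner_incidences_def image_iff)
  moreover have "inj_on (\<lambda>(K, v). (v, K)) (SIGMA K:?Q. K)" by (auto simp: inj_on_def)
  moreover have "finite K" if "K \<in> ?Q" for K
    using that clique_subset finite_V by (auto intro: finite_subset)
  ultimately have "card (inner_incidences A) = (\<Sum>K\<in>?Q. card K)"
    using finite_cliques by (simp add: card_image)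
  also have "\<dots> = h * mu V E h A" using clique_subset by (simp add: mu_def)
  finally show ?thesis .
qed

lemma card_outer_incidences: "card (outer_incidences A) = (\<Sum>v\<in>V - A. cdeg V E h v)"
proof -
  have "outer_incidences A = (SIGMA v:V - A. {K \<in> cliques V E h. v \<in> K})"
    using clique_subset by (auto simp: outer_incidences_def)
  then show ?thesis using finite_V finite_cliques by (simp add: cdeg_def)
qed

lemma card_incidences_partition:
  "card (outer_incidences A) + card (straddling_incidences A) + h * mu V E h A = h * mu V E h V"
proof -
  let ?O = "outer_incidences A" and ?S = "straddling_incidences A" and ?I = "inner_incidences A"
  have fin: "finite ?O" "finite ?S" "finite ?I"
    using finite_incidences
    by (simp_all add: outer_incidences_def straddling_incidences_def inner_incidences_def)
  have "?O \<inter> ?S = {}" "(?O \<union> ?S) \<inter> ?I = {}"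
    by (auto simp: outer_incidences_def straddling_incidences_def inner_incidences_def)
  then have "card (?O \<union> ?S \<union> ?I) = card ?O + card ?S + card ?I"
    using fin by (simp add: card_Un_disjoint)
  moreover have "inner_incidences V = ?O \<union> ?S \<union> ?I"
    using clique_subset
    by (auto simp: outer_incidences_def straddling_incidences_def inner_incidences_def)
  ultimately show ?thesis by (metis card_inner_incidences)
qed

definition boundary_arcs :: "'a set \<Rightarrow> ('a fnode \<times> 'a fnode) set" where
  "boundary_arcs A = (\<lambda>(v, K). (VN v, LN (K - {v}))) ` straddling_incidences A"

lemma Lam_remove:
  assumes K: "K \<in> cliques V E h" and "v \<in> K"
  shows "K - {v} \<in> Lam V E h"
proof -
  have "finite K" using clique_subset[OF K] finite_V by (auto intro: finite_subset)
  then have "K - {v} \<in> cliques V E (h - 1)" using K \<open>v \<in> K\<close> by (auto simp: cliques_def)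
  then show ?thesis using K by (auto simp: Lam_def)
qed

lemma boundary_arcsI:
  assumes "v \<in> A" "l \<in> Lam V E h" "\<not> l \<subseteq> A" "v \<notin> l" "insert v l \<in> cliques V E h"
  shows "(VN v, LN l) \<in> boundary_arcs A"
proof -
  have "(v, insert v l) \<in> straddling_incidences A"
    using assms by (auto simp: straddling_incidences_def)
  moreover have "insert v l - {v} = l" using assms(4) by simp
  ultimately show ?thesis unfolding boundary_arcs_def by force
qed

lemma boundary_arcsE:
  assumes "x \<in> boundary_arcs A"
  obtains v K where "x = (VN v, LN (K - {v}))" "K \<in> cliques V E h" "v \<in> K" "v \<in> A" "\<not> K \<subseteq> A"
    "x \<in> netE V E h" "cap V E h (VN v) (LN (K - {v})) = 1"
proof -
  obtain v K where x: "x = (VN v, LN (K - {v}))" and K: "K \<in> cliques V E h" "v \<in> K" "v \<in> A" "\<not> K \<subseteq> A"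
    using assms by (auto simp: boundary_arcs_def straddling_incidences_def)
  moreover have "x \<in> netE V E h"
    using x K Lam_remove[OF K(1,2)] clique_subset[OF K(1)] insert_Diff[OF K(2)]
    by (auto simp: netE_def)
  moreover have "cap V E h (VN v) (LN (K - {v})) = 1"
    using K insert_Diff[OF K(2)] by (simp add: cap_def)
  ultimately show ?thesis using that by blast
qed

lemma card_boundary_arcs: "card (boundary_arcs A) = card (straddling_incidences A)"
proof -
  have "inj_on (\<lambda>(v, K). (VN v, LN (K - {v}))) (straddling_incidences A)"
    by (rule inj_onI) (auto simp: straddling_incidences_def)
  then show ?thesis unfolding boundary_arcs_def by (rule card_image)
qed

definition core_arcs :: "'a set \<Rightarrow> ('a fnode \<times> 'a fnode) set" where
  "core_arcs A = (\<lambda>v. (Src, VN v)) ` (V - A) \<union> (\<lambda>v. (VN v, Snk)) ` A \<union> boundary_arcs A"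

lemma finite_core_arcs: "A \<subseteq> V \<Longrightarrow> finite (core_arcs A)"
  using finite_V finite_incidences finite_subset[OF _ finite_V, of A]
  by (simp add: core_arcs_def boundary_arcs_def straddling_incidences_def)

definition cut_bound :: "'a set \<Rightarrow> real" where
  "cut_bound A = real h * real (mu V E h V) - real h * real (mu V E h A)
     + real (card A) * (real h * rho_star V E h)"

lemma sum_cap_core_arcs:
  assumes A: "A \<subseteq> V"
  shows "(\<Sum>(u, w)\<in>core_arcs A. cap V E h u w) = ereal (cut_bound A)"
proof -
  let ?T1 = "(\<lambda>v. (Src :: 'a fnode, VN v)) ` (V - A)" and ?T2 = "(\<lambda>v. (VN v, Snk :: 'a fnode)) ` A"
  have fin: "finite ?T1" "finite ?T2" "finite (boundary_arcs A)"
    using finite_core_arcs[OF A] by (auto simp: core_arcs_def)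
  have "(\<Sum>(u, w)\<in>?T1. cap V E h u w) = (\<Sum>v\<in>V - A. ereal (real (cdeg V E h v)))"
    by (simp add: sum.reindex inj_on_def cap_def)
  also have "\<dots> = ereal (real (card (outer_incidences A)))"
    by (simp add: card_outer_incidences)
  finally have T1: "(\<Sum>(u, w)\<in>?T1. cap V E h u w) = ereal (real (card (outer_incidences A)))" .
  have T2: "(\<Sum>(u, w)\<in>?T2. cap V E h u w) = ereal (real (card A) * (real h * rho_star V E h))"
    by (simp add: sum.reindex inj_on_def cap_def)
  have "(\<Sum>(u, w)\<in>boundary_arcs A. cap V E h u w) = (\<Sum>x\<in>boundary_arcs A. ereal 1)"
    by (rule sum.cong) (auto elim: boundary_arcsE)
  then have T3: "(\<Sum>(u, w)\<in>boundary_arcs A. cap V E h u w) = ereal (real (card (straddling_incidences A)))"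
    by (simp add: card_boundary_arcs)
  have "(\<Sum>(u, w)\<in>core_arcs A. cap V E h u w)
      = (\<Sum>(u, w)\<in>?T1. cap V E h u w) + (\<Sum>(u, w)\<in>?T2. cap V E h u w)
        + (\<Sum>(u, w)\<in>boundary_arcs A. cap V E h u w)"
  proof -
    have "?T1 \<inter> ?T2 = {}" "(?T1 \<union> ?T2) \<inter> boundary_arcs A = {}"
      by (auto simp: boundary_arcs_def)
    then show ?thesis unfolding core_arcs_def using fin by (simp add: sum.union_disjoint)
  qed
  also have "\<dots> = ereal (cut_bound A)"
    unfolding T1 T2 T3 cut_bound_def
    using arg_cong[OF card_incidences_partition[of A], of real] by simp
  finally show ?thesis .
qed


lemma core_arcs_subset_crossing:
  assumes Y: "is_st_cut V E h Y"
    and closed: "\<And>l v. l \<in> Lam V E h \<Longrightarrow> v \<in> l \<Longrightarrow> LN l \<in> Y \<Longrightarrow> VN v \<in> Y"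
  shows "core_arcs {v \<in> V. VN v \<in> Y} \<subseteq> crossing Y"
proof -
  let ?A = "{v \<in> V. VN v \<in> Y}"
  have "(Src, VN v) \<in> crossing Y" if "v \<in> V - ?A" for v
    using that Y by (simp add: crossing_def netE_def is_st_cut_def)
  moreover have "(VN v, Snk) \<in> crossing Y" if "v \<in> ?A" for v
    using that Y by (simp add: crossing_def netE_def is_st_cut_def)
  moreover have "x \<in> crossing Y" if "x \<in> boundary_arcs ?A" for x
  proof -
    obtain v K where x: "x = (VN v, LN (K - {v}))" "K \<in> cliques V E h" "v \<in> K" "v \<in> ?A"
      "\<not> K \<subseteq> ?A" "x \<in> netE V E h"
      using \<open>x \<in> boundary_arcs ?A\<close> by (rule boundary_arcsE)
    have "LN (K - {v}) \<notin> Y"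
    proof
      assume "LN (K - {v}) \<in> Y"
      then have "K - {v} \<subseteq> ?A"
        using closed[OF Lam_remove[OF x(2,3)]] clique_subset[OF x(2)] by blast
      then show False using x(4,5) by blast
    qed
    then show ?thesis using x by (simp add: crossing_def)
  qed
  ultimately show ?thesis unfolding core_arcs_def by blast
qed

lemma cut_bound_le_cut_cap:
  assumes Y: "is_st_cut V E h Y"
  shows "ereal (cut_bound {v \<in> V. VN v \<in> Y}) \<le> cut_cap V E h Y"
proof (cases "\<exists>l\<in>Lam V E h. \<exists>v\<in>l. LN l \<in> Y \<and> VN v \<notin> Y")
  case True
  then obtain l v where "l \<in> Lam V E h" "v \<in> l" "LN l \<in> Y" "VN v \<notin> Y" by blast
  then have "(LN l, VN v) \<in> crossing Y" "cap V E h (LN l) (VN v) = \<infinity>"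
    by (auto simp: crossing_def netE_def cap_def)
  then have "cut_cap V E h Y = \<infinity>"
    unfolding cut_cap_eq_sum_crossing sum_Pinfty using finite_crossing by force
  then show ?thesis by simp
next
  case False
  then have "core_arcs {v \<in> V. VN v \<in> Y} \<subseteq> crossing Y"
    using core_arcs_subset_crossing[OF Y] by blast
  then have "(\<Sum>(u, w)\<in>core_arcs {v \<in> V. VN v \<in> Y}. cap V E h u w) \<le> cut_cap V E h Y"
    unfolding cut_cap_eq_sum_crossing
    by (intro sum_mono2 finite_crossing) (auto simp: cap_nonneg)
  then show ?thesis by (simp add: sum_cap_core_arcs)
qed

lemma crossing_clique_cut_subset_core_arcs:
  assumes "(u, w) \<in> crossing (clique_cut A)" and cap: "cap V E h u w \<noteq> 0"
  shows "(u, w) \<in> core_arcs A"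
proof -
  have uw: "(u, w) \<in> netE V E h" and u: "u \<in> clique_cut A" and w: "w \<notin> clique_cut A"
    using assms(1) by (auto simp: crossing_def)
  have VN_iff: "VN v \<in> clique_cut A \<longleftrightarrow> v \<in> A" for v by (auto simp: clique_cut_def)
  have LN_iff: "LN l \<in> clique_cut A \<longleftrightarrow> l \<in> Lam V E h \<and> l \<subseteq> A" for l
    by (auto simp: clique_cut_def)
  from uw show ?thesis
  proof (cases rule: netE_cases)
    case (src v)
    then show ?thesis using w VN_iff by (auto simp: core_arcs_def)
  next
    case (src_rev v)
    then show ?thesis using w by (auto simp: clique_cut_def)
  next
    case (snk v)
    then show ?thesis using u VN_iff by (auto simp: core_arcs_def)
  next
    case (snk_rev v)
    then show ?thesis using u by (auto simp: clique_cut_def)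
  next
    case (member l v)
    then show ?thesis using u w VN_iff LN_iff by auto
  next
    case (member_rev l v)
    then show ?thesis using cap by (simp add: cap_def)
  next
    case (extension l v)
    then have "(u, w) \<in> boundary_arcs A"
      using u w VN_iff LN_iff by (auto intro: boundary_arcsI)
    then show ?thesis by (simp add: core_arcs_def)
  next
    case (extension_rev l v)
    then show ?thesis using cap by (simp add: cap_def)
  qed
qed

lemma cut_cap_clique_cut:
  assumes A: "A \<subseteq> V"
  shows "cut_cap V E h (clique_cut A) = ereal (cut_bound A)"
proof (rule antisym)
  have "cut_cap V E h (clique_cut A)
      = (\<Sum>(u, w)\<in>crossing (clique_cut A) \<inter> core_arcs A. cap V E h u w)"
    unfolding cut_cap_eq_sum_crossing
    by (intro sum.mono_neutral_right finite_crossing)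
      (auto dest: crossing_clique_cut_subset_core_arcs)
  also have "\<dots> \<le> (\<Sum>(u, w)\<in>core_arcs A. cap V E h u w)"
    by (intro sum_mono2 finite_core_arcs[OF A]) (auto simp: cap_nonneg)
  finally show "cut_cap V E h (clique_cut A) \<le> ereal (cut_bound A)"
    by (simp add: sum_cap_core_arcs[OF A])
  have "{v \<in> V. VN v \<in> clique_cut A} = A" using A by (auto simp: clique_cut_def)
  then show "ereal (cut_bound A) \<le> cut_cap V E h (clique_cut A)"
    using cut_bound_le_cut_cap[OF is_st_cut_clique_cut[OF A]] by simp
qed

lemma cut_bound_empty: "cut_bound {} = real h * real (mu V E h V)"
  by (simp add: cut_bound_def mu_empty)

lemma mu_V_le_cut_bound:
  assumes "A \<subseteq> V"
  shows "real h * real (mu V E h V) \<le> cut_bound A"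
  using mult_left_mono[OF mu_le[OF assms], of "real h"] by (simp add: cut_bound_def algebra_simps)

lemma mu_V_le_cut_cap:
  assumes Y: "is_st_cut V E h Y"
  shows "ereal (real h * real (mu V E h V)) \<le> cut_cap V E h Y"
proof -
  have "ereal (real h * real (mu V E h V)) \<le> ereal (cut_bound {v \<in> V. VN v \<in> Y})"
    using mu_V_le_cut_bound[of "{v \<in> V. VN v \<in> Y}"] by simp
  also have "\<dots> \<le> cut_cap V E h Y" by (rule cut_bound_le_cut_cap[OF Y])
  finally show ?thesis .
qed

lemma is_min_st_cut_clique_cut_iff:
  assumes A: "A \<subseteq> V"
  shows "is_min_st_cut V E h (clique_cut A) \<longleftrightarrow> cut_bound A \<le> real h * real (mu V E h V)"
proof
  assume "is_min_st_cut V E h (clique_cut A)"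
  then have "cut_cap V E h (clique_cut A) \<le> cut_cap V E h (clique_cut {})"
    using is_st_cut_clique_cut[of "{}"] by (simp add: is_min_st_cut_def)
  then show "cut_bound A \<le> real h * real (mu V E h V)"
    using cut_cap_clique_cut[OF A] cut_cap_clique_cut[of "{}"] by (simp add: cut_bound_empty)
next
  assume "cut_bound A \<le> real h * real (mu V E h V)"
  then show "is_min_st_cut V E h (clique_cut A)"
    using is_st_cut_clique_cut[OF A] cut_cap_clique_cut[OF A] mu_V_le_cut_cap
    unfolding is_min_st_cut_def by (metis ereal_less_eq(3) order_trans)
qed

lemma cut_bound_le_iff_densest:
  assumes A: "A \<subseteq> V" "A \<noteq> {}"
  shows "cut_bound A \<le> real h * real (mu V E h V) \<longleftrightarrow> rho V E h A = rho_star V E h"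
proof -
  have "real (card A) > 0" using A finite_subset[OF _ finite_V] by (simp add: card_gt_0_iff)
  have "cut_bound A \<le> real h * real (mu V E h V)
      \<longleftrightarrow> real h * (real (card A) * rho_star V E h) \<le> real h * real (mu V E h A)"
    by (simp add: cut_bound_def algebra_simps)
  also have "\<dots> \<longleftrightarrow> rho_star V E h \<le> rho V E h A"
    using h_ge_2 \<open>real (card A) > 0\<close> by (simp add: rho_def pos_le_divide_eq mult.commute)
  also have "\<dots> \<longleftrightarrow> rho V E h A = rho_star V E h"
    using rho_le_rho_star[OF A] by auto
  finally show ?thesis .
qed

end

theorem lemma3:
  fixes V :: "'a set" and E :: "'a set set" and h :: nat
    and f :: "'a fnode \<Rightarrow> 'a fnode \<Rightarrow> real" and V1 :: "'a set"
  assumes "simple_graph V E" and "h \<ge> 2"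
    and "is_max_flow V E h f"
    and "V1 \<subseteq> V" and "V1 \<noteq> {}"
  defines "S \<equiv> {Src} \<union> VN ` V1 \<union> LN ` {l \<in> Lam V E h. l \<subseteq> V1}"
  shows "(rho V E h V1 = rho_star V E h \<longleftrightarrow> is_min_st_cut V E h S)
       \<and> (is_min_st_cut V E h S \<longleftrightarrow>
            \<not> (\<exists>u\<in>S. \<exists>w\<in>netV V E h - S. residual_arc V E h f u w))"
proof -
  interpret net V E h
    using assms(1,2,4,5) by unfold_locales auto
  have S: "S = clique_cut V1" by (simp add: S_def clique_cut_def)
  show ?thesis
    unfolding S
    using is_min_st_cut_clique_cut_iff[OF assms(4)] cut_bound_le_iff_densest[OF assms(4,5)]
      min_st_cut_iff_no_residual_arc[OF assms(3) is_st_cut_clique_cut[OF assms(4)]]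
    by simp
qed

end
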